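(* Let $\mu,\nu$ be Radon measures on $\mathbb R^d$ without common atoms, let $1<p<\infty$, and let $K\in L^2_{\mathrm{loc}}(\mu\times\nu)$ (locally square integrable on all of $\mathbb R^d\times\mathbb R^d$, including near the diagonal) be $L^p(\mu)\to L^p(\nu)$ restrictedly bounded with restricted norm $C$. Then the integral operator $Tf(x)=\int K(x,y)f(y)\,d\mu(y)$, defined for bounded compactly supported $f$, satisfies $\|Tf\|_{L^p(\nu)}\le 2C\|f\|_{L^p(\mu)}$, so it extends to a bounded operator $L^p(\mu)\to L^p(\nu)$ of norm at most $2C$.
   Context: $K$ is $L^p(\mu)\to L^p(\nu)$ restrictedly bounded if there is $C$ such that for all $f\in L^\infty(\mu)$, $g\in L^\infty(\nu)$ with separated (disjoint) compact supports, $\left|\iint K(x,y)f(y)g(x)\,d\mu(y)\,d\nu(x)\right|\le C\|f\|_{L^p(\mu)}\|g\|_{L^{p'}(\nu)}$, $1/p+1/p'=1$; the best such $C$ is the restricted norm. *)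

theory Defs
  imports "HOL-Analysis.Analysis"
begin

definition radon_measure :: "'a::euclidean_space measure \<Rightarrow> bool" where
  "radon_measure M \<longleftrightarrow> sets M = sets borel \<and> (\<forall>S. compact S \<longrightarrow> emeasure M S < \<infinity>)"

definition no_common_atoms :: "'a measure \<Rightarrow> 'a measure \<Rightarrow> bool" where
  "no_common_atoms M N \<longleftrightarrow> (\<forall>x. emeasure M {x} = 0 \<or> emeasure N {x} = 0)"

text \<open>L^p norm (used for p > 0 on functions for which the integral is finite).\<close>
definition Lp_norm :: "'a measure \<Rightarrow> real \<Rightarrow> ('a \<Rightarrow> real) \<Rightarrow> real" where
  "Lp_norm M p f = (\<integral>x. \<bar>f x\<bar> powr p \<partial>M) powr (1 / p)"

definition memLp :: "'a measure \<Rightarrow> real \<Rightarrow> ('a \<Rightarrow> real) \<Rightarrow> bool" where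
  "memLp M p f \<longleftrightarrow> f \<in> borel_measurable M \<and> integrable M (\<lambda>x. \<bar>f x\<bar> powr p)"

definition bdd_compact_supp :: "'a::euclidean_space measure \<Rightarrow> ('a \<Rightarrow> real) \<Rightarrow> bool" where
  "bdd_compact_supp M f \<longleftrightarrow> f \<in> borel_measurable M \<and> bounded (range f) \<and>
     (\<exists>S. compact S \<and> (\<forall>y. y \<notin> S \<longrightarrow> f y = 0))"

text \<open>Kernel K(x,y) (x in the target space of N, y in the source space of M) locally square
  integrable w.r.t. the product measure nu x mu on all of R^d x R^d.\<close>
definition loc_square_integrable ::
  "'a::euclidean_space measure \<Rightarrow> 'a measure \<Rightarrow> ('a \<Rightarrow> 'a \<Rightarrow> real) \<Rightarrow> bool" where
  "loc_square_integrable N M K \<longleftrightarrow>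
     (\<lambda>z. K (fst z) (snd z)) \<in> borel_measurable (N \<Otimes>\<^sub>M M) \<and>
     (\<forall>S. compact S \<longrightarrow> set_integrable (N \<Otimes>\<^sub>M M) S (\<lambda>z. (K (fst z) (snd z))\<^sup>2))"

definition restrictedly_bounded ::
  "'a::euclidean_space measure \<Rightarrow> 'a measure \<Rightarrow> real \<Rightarrow> ('a \<Rightarrow> 'a \<Rightarrow> real) \<Rightarrow> real \<Rightarrow> bool" where
  "restrictedly_bounded M N p K C \<longleftrightarrow>
     (\<forall>f g A B. f \<in> borel_measurable M \<and> g \<in> borel_measurable N \<and>
        bounded (range f) \<and> bounded (range g) \<and> compact A \<and> compact B \<and> A \<inter> B = {} \<and>
        (\<forall>y. y \<notin> A \<longrightarrow> f y = 0) \<and> (\<forall>x. x \<notin> B \<longrightarrow> g x = 0) \<longrightarrow>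
        \<bar>\<integral>x. (\<integral>y. K x y * f y \<partial>M) * g x \<partial>N\<bar>
          \<le> C * Lp_norm M p f * Lp_norm N (p / (p - 1)) g)"

end

theory Submission
  imports Defs
begin

text \<open>Write \<open>\<langle>T f, g\<rangle> = \<integral>\<integral> K(x,y) f(y) g(x)\<close>. Restricted boundedness, assumed for compact disjoint
  supports, extends to Borel disjoint supports by inner regularity and dominated convergence.
  Cover the supports of \<open>f\<close> and \<open>g\<close> by finitely many disjoint Borel pieces \<open>Q\<^sub>i\<close> of small
  diameter and split \<open>\<langle>T f, g\<rangle>\<close> into the blocks \<open>\<langle>T (f 1\<^bsub>Q\<^sub>i\<^esub>), g 1\<^bsub>Q\<^sub>j\<^esub>\<rangle>\<close>. For a cut \<open>S\<close> of the
  index set, the blocks crossing the cut in either direction are pairings of functions with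
  disjoint supports, and a two-term Hoelder inequality bounds their sum by \<open>C \<parallel>f\<parallel>\<^sub>p \<parallel>g\<parallel>\<^sub>p\<^sub>'\<close>.
  Averaging over all cuts, every off-diagonal pair is separated equally often, which bounds
  the off-diagonal part by \<open>2 C \<parallel>f\<parallel>\<^sub>p \<parallel>g\<parallel>\<^sub>p\<^sub>'\<close>. The diagonal blocks are dominated by the integral
  of \<open>\<bar>K\<bar>\<close> over a thin neighbourhood of the diagonal, which is small because \<open>K\<close> is locally
  integrable and the diagonal is \<open>\<nu> \<times> \<mu>\<close>-null when \<open>\<mu>\<close> and \<open>\<nu>\<close> share no atoms. Duality against
  truncations of \<open>sgn (T f) \<bar>T f\<bar>\<^sup>p\<^sup>-\<^sup>1\<close> finally turns the bound on \<open>\<langle>T f, g\<rangle>\<close> into the \<open>L\<^sup>p\<close> bound.\<close>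

section \<open>Radon measures\<close>

lemma radon_measureD:
  assumes "radon_measure L"
  shows radon_measure_sets: "sets L = sets borel"
    and radon_measure_space: "space L = UNIV"
    and radon_measure_compact_finite: "compact S \<Longrightarrow> emeasure L S < \<infinity>"
  using assms sets_eq_imp_space_eq[of L borel] by (auto simp: radon_measure_def)

lemma sigma_finite_measure_radon:
  assumes "radon_measure L"
  shows "sigma_finite_measure L"
proof
  have "(\<Union>n::nat. cball (0::'a) (real n)) = UNIV"
    by (auto simp: dist_norm intro: real_arch_simple)
  moreover have "emeasure L (cball 0 r) \<noteq> \<infinity>" for r
    using radon_measureD(3)[OF assms compact_cball, of 0 r] by (simp add: less_top)
  ultimately show "\<exists>A. countable A \<and> A \<subseteq> sets L \<and> \<Union> A = space L \<and> (\<forall>a\<in>A. emeasure L a \<noteq> \<infinity>)"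
    using radon_measureD[OF assms]
    by (intro exI[of _ "range (\<lambda>n::nat. cball 0 (real n))"]) (auto intro: borel_closed)
qed

lemma countable_atoms_radon:
  assumes "radon_measure L"
  shows "countable {x. emeasure L {x} \<noteq> 0}"
proof -
  note L = radon_measureD[OF assms]
  define L' where "L' n = density L (indicator (cball (0::'a) (real n)))" for n :: nat
  have cball: "cball 0 r \<in> sets L" for r :: real
    using L by (simp add: borel_closed)
  have "finite_measure (L' n)" for n
  proof
    have "emeasure (L' n) (space (L' n)) = emeasure L (cball 0 (real n) \<inter> UNIV)"
      unfolding L'_def using L by (simp add: emeasure_restricted[OF cball])
    then show "emeasure (L' n) (space (L' n)) \<noteq> \<infinity>"
      using L by (simp add: less_top[symmetric])
  qed
  then have "countable (\<Union>n. {x. measure (L' n) {x} \<noteq> 0})"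
    by (intro countable_UN[OF countableI_type] finite_measure.countable_support)
  moreover have "{x. emeasure L {x} \<noteq> 0} \<subseteq> (\<Union>n. {x. measure (L' n) {x} \<noteq> 0})"
  proof
    fix x :: 'a assume "x \<in> {x. emeasure L {x} \<noteq> 0}"
    then have "measure L {x} \<noteq> 0"
      using L by (simp add: measure_def enn2real_eq_0_iff less_top[symmetric])
    moreover obtain n :: nat where "norm x \<le> real n"
      using real_arch_simple by blast
    then have "cball 0 (real n) \<inter> {x} = {x}"
      by auto
    ultimately have "measure (L' n) {x} \<noteq> 0"
      unfolding L'_def using L by (simp add: measure_restricted[OF cball])
    then show "x \<in> (\<Union>n. {x. measure (L' n) {x} \<noteq> 0})"
      by blast
  qed
  ultimately show ?thesis
    by (rule countable_subset[rotated])
qed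

lemma inner_regular_compact_measure_diff_less:
  fixes L :: "'a::{second_countable_topology, complete_space} measure"
  assumes sL: "sets L = sets borel" and D: "D \<in> sets L" "emeasure L D < \<infinity>" and "0 < e"
  shows "\<exists>K. compact K \<and> K \<subseteq> D \<and> measure L (D - K) < e"
proof -
  define L' where "L' = density L (indicator D)"
  have sL': "sets L' = sets borel"
    unfolding L'_def using sL by simp
  have L'_eq: "emeasure L' X = emeasure L (D \<inter> X)" if "X \<in> sets borel" for X
    unfolding L'_def using that sL by (simp add: emeasure_restricted[OF D(1)])
  have "emeasure L' (space L') \<noteq> \<infinity>"
    using L'_eq[of UNIV] D(2) sets_eq_imp_space_eq[OF sL'] by simp
  from inner_regular[OF sL' this, of D]
  have sup: "emeasure L D = (SUP K \<in> {K. K \<subseteq> D \<and> compact K}. emeasure L' K)"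
    using L'_eq[of D] D(1) sL by simp
  show ?thesis
  proof (cases "measure L D < e")
    case True
    then show ?thesis
      by (intro exI[of _ "{}"]) simp
  next
    case False
    have "ennreal (measure L D - e) < emeasure L D"
      using False \<open>0 < e\<close> D(2) by (simp add: emeasure_eq_ennreal_measure ennreal_lessI)
    then obtain K where K: "K \<subseteq> D" "compact K" and lt: "ennreal (measure L D - e) < emeasure L' K"
      unfolding sup less_SUP_iff by blast
    have KL: "K \<in> sets L"
      using K(2) sL by (simp add: borel_compact)
    have "emeasure L' K = emeasure L K"
      using L'_eq[of K] KL K(1) sL by (simp add: Int_absorb1)
    also have "\<dots> = ennreal (measure L K)"
      using emeasure_mono[OF K(1) D(1)] D(2) by (intro emeasure_eq_ennreal_measure) auto
    finally have "measure L D - e < measure L K"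
      using lt False by (simp add: ennreal_less_iff)
    moreover have "measure L (D - K) = measure L D - measure L K"
      using D KL K(1) by (intro measure_Diff) auto
    ultimately show ?thesis
      using K by auto
  qed
qed

lemma inner_regular_incseq_compact:
  fixes L :: "'a::{second_countable_topology, complete_space} measure"
  assumes sL: "sets L = sets borel" and D: "D \<in> sets L" "emeasure L D < \<infinity>"
  obtains G where "\<And>n. compact (G n)" "\<And>n. G n \<subseteq> D" "incseq G" "D - (\<Union>n. G n) \<in> null_sets L"
proof -
  have "\<forall>n::nat. \<exists>K. compact K \<and> K \<subseteq> D \<and> measure L (D - K) < 1 / (real n + 1)"
    using inner_regular_compact_measure_diff_less[OF assms] by simp
  then obtain K where K: "\<And>n. compact (K n)" "\<And>n. K n \<subseteq> D" "\<And>n. measure L (D - K n) < 1 / (real n + 1)"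
    by metis
  define G where "G n = (\<Union>m\<le>n. K m)" for n
  have G: "compact (G n)" "G n \<subseteq> D" for n
    unfolding G_def using K by (auto intro: compact_UN)
  have "incseq G"
    unfolding G_def incseq_def by (auto intro: le_trans)
  define R where "R = D - (\<Union>n. G n)"
  have RL: "R \<in> sets L" and KL: "D - K n \<in> sets L" for n
    unfolding R_def using D(1) sL borel_compact[OF G(1)] borel_compact[OF K(1)]
    by (auto intro!: sets.Diff sets.countable_UN)
  have "D \<in> fmeasurable L"
    using D by (simp add: fmeasurable_def)
  moreover have "R \<subseteq> D - K n" for n
    unfolding R_def G_def by blast
  ultimately have mono: "measure L R \<le> measure L (D - K n)" for n
    using KL RL by (intro measure_mono_fmeasurable) (auto intro: fmeasurableI2)
  have "measure L R \<le> 0"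
  proof (rule field_le_epsilon)
    fix e :: real
    assume "0 < e"
    then obtain n :: nat where "1 / (real n + 1) < e"
      by (metis nat_approx_posE of_nat_Suc add.commute)
    then show "measure L R \<le> 0 + e"
      using mono[of n] K(3)[of n] by linarith
  qed
  moreover have "emeasure L R < \<infinity>"
    using emeasure_mono[of R D L] D unfolding R_def by (simp add: Diff_subset)
  ultimately have "R \<in> null_sets L"
    using RL measure_nonneg[of L R] by (simp add: emeasure_eq_ennreal_measure null_sets_def less_top)
  then show ?thesis
    using that[OF G \<open>incseq G\<close>] unfolding R_def by blast
qed

lemma radon_incseq_compact_exhaustion:
  assumes L: "radon_measure L" and "E \<in> sets borel" "compact A"
  obtains G where "\<And>n. compact (G n)" "\<And>n. G n \<subseteq> E \<inter> A" "incseq G" "E \<inter> A - (\<Union>n. G n) \<in> null_sets L"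
proof (rule inner_regular_incseq_compact[OF radon_measure_sets[OF L]])
  show "E \<inter> A \<in> sets L"
    using assms(2) borel_compact[OF assms(3)] by (simp add: radon_measure_sets[OF L])
  then have "emeasure L (E \<inter> A) \<le> emeasure L A"
    using assms(3) by (intro emeasure_mono) (simp_all add: radon_measure_sets[OF L] borel_compact)
  then show "emeasure L (E \<inter> A) < \<infinity>"
    using radon_measure_compact_finite[OF L assms(3)] by simp
qed (rule that)

section \<open>Elementary inequalities, cuts and partitions\<close>

lemma Youngs_inequality_nonneg:
  fixes x y s t :: real
  assumes "0 < s" "0 < t" "s + t = 1" "0 \<le> x" "0 \<le> y"
  shows "x powr s * y powr t \<le> s * x + t * y"
  using Youngs_inequality_0[of s t x y] assms by (cases "x = 0 \<or> y = 0") auto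

lemma Hoelder_inequality_two_terms:
  fixes a1 a2 b1 b2 s t :: real
  assumes st: "0 < s" "0 < t" "s + t = 1"
    and nonneg: "0 \<le> a1" "0 \<le> a2" "0 \<le> b1" "0 \<le> b2"
  shows "a1 powr s * b1 powr t + a2 powr s * b2 powr t \<le> (a1 + a2) powr s * (b1 + b2) powr t"
proof (cases "a1 + a2 = 0 \<or> b1 + b2 = 0")
  case True
  then have "(a1 = 0 \<and> a2 = 0) \<or> (b1 = 0 \<and> b2 = 0)"
    using nonneg by linarith
  then show ?thesis
    using st by auto
next
  case False
  define A B where "A = a1 + a2" and "B = b1 + b2"
  have "A > 0" "B > 0"
    using False nonneg unfolding A_def B_def by linarith+
  have "(a1/A) powr s * (b1/B) powr t + (a2/A) powr s * (b2/B) powr t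
      \<le> (s * (a1/A) + t * (b1/B)) + (s * (a2/A) + t * (b2/B))"
    using \<open>A > 0\<close> \<open>B > 0\<close> nonneg
    by (intro add_mono Youngs_inequality_nonneg[OF st]) simp_all
  also have "\<dots> = s * ((a1 + a2) / A) + t * ((b1 + b2) / B)"
    by (simp add: add_divide_distrib algebra_simps)
  also have "\<dots> = 1"
    using \<open>A > 0\<close> \<open>B > 0\<close> st unfolding A_def B_def by simp
  finally have "(a1 powr s * b1 powr t + a2 powr s * b2 powr t) / (A powr s * B powr t) \<le> 1"
    using \<open>A > 0\<close> \<open>B > 0\<close> nonneg by (simp add: powr_divide add_divide_distrib)
  then show ?thesis
    using \<open>A > 0\<close> \<open>B > 0\<close> unfolding A_def B_def by (simp add: divide_le_eq)
qed

lemma le_powr_of_le_mult_powr: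
  fixes a b p q :: real
  assumes "0 \<le> a" "0 \<le> b" "0 < p" "0 < q" "1 / p + 1 / q = 1" "a \<le> b * a powr (1 / q)"
  shows "a \<le> b powr p"
proof (cases "a = 0")
  case False
  then have "a > 0"
    using assms(1) by simp
  have "a powr (1/p) * a powr (1/q) \<le> b * a powr (1/q)"
    using assms(5,6) \<open>a > 0\<close> by (simp add: powr_add[symmetric])
  then have "a powr (1/p) \<le> b"
    using \<open>a > 0\<close> by simp
  then have "(a powr (1/p)) powr p \<le> b powr p"
    using assms(3) by (intro powr_mono2) simp_all
  then show ?thesis
    using \<open>a > 0\<close> assms(3) by (simp add: powr_powr)
qed (use assms in simp)

lemma card_separating_subsets:
  assumes "finite I" "i \<in> I" "j \<in> I" "i \<noteq> j"
  shows "card {S \<in> Pow I. i \<in> S \<and> j \<notin> S} = 2 ^ (card I - 2)"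
proof -
  have "bij_betw (\<lambda>S. S - {i}) {S \<in> Pow I. i \<in> S \<and> j \<notin> S} (Pow (I - {i, j}))"
    by (rule bij_betw_byWitness[where f'="insert i"]) (use assms in auto)
  then have "card {S \<in> Pow I. i \<in> S \<and> j \<notin> S} = 2 ^ card (I - {i, j})"
    using assms(1) by (simp add: bij_betw_same_card card_Pow)
  also have "card (I - {i, j}) = card I - 2"
    using assms by (subst card_Diff_subset) auto
  finally show ?thesis .
qed

lemma sum_Pow_cut:
  fixes a :: "'b \<Rightarrow> 'b \<Rightarrow> real"
  assumes I: "finite I"
  shows "(\<Sum>S\<in>Pow I. \<Sum>i\<in>S. \<Sum>j\<in>I - S. a i j) = 2 ^ (card I - 2) * (\<Sum>i\<in>I. \<Sum>j\<in>I - {i}. a i j)"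
proof -
  have cut: "(\<Sum>i\<in>S. \<Sum>j\<in>I - S. a i j) = (\<Sum>i\<in>I. \<Sum>j\<in>I. if i \<in> S \<and> j \<notin> S then a i j else 0)"
    if "S \<subseteq> I" for S
  proof -
    have "(\<Sum>i\<in>I. \<Sum>j\<in>I. if i \<in> S \<and> j \<notin> S then a i j else 0)
        = (\<Sum>i\<in>I. if i \<in> S then (\<Sum>j\<in>I. if j \<notin> S then a i j else 0) else 0)"
      by (intro sum.cong) auto
    also have "\<dots> = (\<Sum>i\<in>{i \<in> I. i \<in> S}. \<Sum>j\<in>{j \<in> I. j \<notin> S}. a i j)"
      by (simp add: sum.inter_filter[OF I])
    also have "\<dots> = (\<Sum>i\<in>S. \<Sum>j\<in>I - S. a i j)"
      using that by (intro sum.cong) auto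
    finally show ?thesis
      by simp
  qed
  have "(\<Sum>S\<in>Pow I. \<Sum>i\<in>S. \<Sum>j\<in>I - S. a i j)
      = (\<Sum>i\<in>I. \<Sum>j\<in>I. \<Sum>S\<in>Pow I. if i \<in> S \<and> j \<notin> S then a i j else 0)"
    by (simp add: cut sum.swap[of _ "Pow I"])
  also have "\<dots> = (\<Sum>i\<in>I. \<Sum>j\<in>I. a i j * card {S \<in> Pow I. i \<in> S \<and> j \<notin> S})"
  proof (intro sum.cong refl)
    fix i j
    have "(\<Sum>S\<in>Pow I. if i \<in> S \<and> j \<notin> S then a i j else 0)
        = (\<Sum>S\<in>{S \<in> Pow I. i \<in> S \<and> j \<notin> S}. a i j)"
      using I by (intro sum.inter_filter[symmetric]) simp
    then show "(\<Sum>S\<in>Pow I. if i \<in> S \<and> j \<notin> S then a i j else 0)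
        = a i j * card {S \<in> Pow I. i \<in> S \<and> j \<notin> S}"
      by simp
  qed
  also have "\<dots> = (\<Sum>i\<in>I. \<Sum>j\<in>I - {i}. a i j * 2 ^ (card I - 2))"
  proof (rule sum.cong[OF refl])
    fix i
    assume "i \<in> I"
    then show "(\<Sum>j\<in>I. a i j * card {S \<in> Pow I. i \<in> S \<and> j \<notin> S})
        = (\<Sum>j\<in>I - {i}. a i j * 2 ^ (card I - 2))"
      using I card_separating_subsets[OF I \<open>i \<in> I\<close>]
      by (simp add: sum.remove del: Pow_iff) (intro sum.cong; auto)
  qed
  finally show ?thesis
    by (simp add: sum_distrib_left sum_distrib_right mult.commute)
qed

lemma sum_offdiagonal_swap:
  assumes "finite I"
  shows "(\<Sum>i\<in>I. \<Sum>j\<in>I - {i}. a j i) = (\<Sum>i\<in>I. \<Sum>j\<in>I - {i}. a i j)"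
proof -
  have "I - {i} = {j. j \<in> I \<and> j \<noteq> i}" "I - {i} = {j. j \<in> I \<and> i \<noteq> j}" for i
    by auto
  then show ?thesis
    using sum.swap_restrict[OF assms assms, of "\<lambda>i j. a j i" "\<lambda>i j. j \<noteq> i"] by simp
qed

text \<open>Each ordered pair \<open>i \<noteq> j\<close> is separated by \<open>2 ^ (card I - 2)\<close> of the \<open>2 ^ card I\<close> cuts
  \<open>S \<subseteq> I\<close> (\<open>sum_Pow_cut\<close>).\<close>

lemma abs_sum_offdiagonal_le_of_cuts:
  fixes a :: "'b \<Rightarrow> 'b \<Rightarrow> real"
  assumes I: "finite I" and cut_bound: "\<And>S. S \<subseteq> I \<Longrightarrow> \<bar>\<Sum>i\<in>S. \<Sum>j\<in>I - S. a i j + a j i\<bar> \<le> Y"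
  shows "\<bar>\<Sum>i\<in>I. \<Sum>j\<in>I - {i}. a i j\<bar> \<le> 2 * Y"
proof -
  define Off where "Off = (\<Sum>i\<in>I. \<Sum>j\<in>I - {i}. a i j)"
  have "(\<Sum>S\<in>Pow I. \<Sum>i\<in>S. \<Sum>j\<in>I - S. a i j + a j i) = 2 ^ (card I - 2) * (2 * Off)"
    unfolding sum_Pow_cut[OF I] Off_def
    by (simp add: sum.distrib sum_offdiagonal_swap[OF I, of a])
  moreover have "\<bar>\<Sum>S\<in>Pow I. \<Sum>i\<in>S. \<Sum>j\<in>I - S. a i j + a j i\<bar> \<le> 2 ^ card I * Y"
  proof -
    have "\<bar>\<Sum>S\<in>Pow I. \<Sum>i\<in>S. \<Sum>j\<in>I - S. a i j + a j i\<bar> \<le> (\<Sum>S\<in>Pow I. Y)"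
      using cut_bound by (intro order_trans[OF sum_abs sum_mono]) auto
    then show ?thesis
      using I by (simp add: card_Pow)
  qed
  ultimately have bound: "2 ^ (card I - 2) * (2 * \<bar>Off\<bar>) \<le> 2 ^ card I * Y"
    by (simp add: abs_mult)
  show ?thesis
  proof (cases "2 \<le> card I")
    case True
    then have "(2::real) ^ card I = 2 ^ (card I - 2 + 2)"
      by (simp only: le_add_diff_inverse2)
    also have "\<dots> = 2 ^ (card I - 2) * 4"
      by (simp add: power_add)
    finally have "(2::real) ^ card I = 2 ^ (card I - 2) * 4" .
    then have "\<bar>Off\<bar> \<le> 2 * Y"
      using bound by simp
    then show ?thesis
      unfolding Off_def .
  next
    case False
    have empty: "I - {i} = {}" if "i \<in> I" for i
    proof -
      have "card (I - {i}) = 0"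
        using False card_Diff_singleton[OF that] by simp
      then show ?thesis
        using I by simp
    qed
    then have "Off = 0"
      unfolding Off_def by (simp add: empty)
    moreover have "0 \<le> Y"
      using cut_bound[of "{}"] by simp
    ultimately show ?thesis
      unfolding Off_def by simp
  qed
qed

lemma compact_partition_small_diameter:
  fixes U :: "'a::metric_space set"
  assumes "compact U" "0 < \<delta>"
  obtains I :: "nat set" and Q where "finite I" "disjoint_family_on Q I"
    "\<And>i. i \<in> I \<Longrightarrow> Q i \<in> sets borel" "U \<subseteq> (\<Union>i\<in>I. Q i)"
    "\<And>i x y. i \<in> I \<Longrightarrow> x \<in> Q i \<Longrightarrow> y \<in> Q i \<Longrightarrow> dist x y < \<delta>"
proof -
  obtain F where "F \<subseteq> U" "finite F" and cover: "U \<subseteq> (\<Union>c\<in>F. ball c (\<delta>/2))"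
    using assms by (elim compactE_image[of U U "\<lambda>c. ball c (\<delta>/2)"]) auto
  then obtain xs where xs: "set xs = F"
    using finite_list by blast
  define B where "B i = ball (xs ! i) (\<delta>/2)" for i
  define I where "I = {0..<length xs}"
  have "U \<subseteq> (\<Union>i\<in>I. B i)"
  proof
    fix x
    assume "x \<in> U"
    then obtain c where "c \<in> set xs" "x \<in> ball c (\<delta>/2)"
      using cover xs by blast
    then obtain k where "k < length xs" "xs ! k = c"
      by (auto simp: in_set_conv_nth)
    then show "x \<in> (\<Union>i\<in>I. B i)"
      unfolding I_def B_def using \<open>x \<in> ball c (\<delta>/2)\<close> by auto
  qed
  also have "\<dots> = (\<Union>i\<in>I. disjointed B i)"
    unfolding I_def by (rule finite_UN_disjointed_eq[symmetric])
  finally have "U \<subseteq> (\<Union>i\<in>I. disjointed B i)" .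
  moreover have "disjointed B i \<in> sets borel" for i
    unfolding disjointed_def B_def by (intro sets.Diff sets.finite_UN borel_open) auto
  moreover have "dist x y < \<delta>" if "x \<in> disjointed B i" "y \<in> disjointed B i" for i x y
  proof -
    have "dist (xs ! i) x < \<delta>/2" "dist (xs ! i) y < \<delta>/2"
      using that disjointed_subset[of B i] unfolding B_def by auto
    then show ?thesis
      using dist_triangle[of x y "xs ! i"] by (simp add: dist_commute)
  qed
  ultimately show ?thesis
    using disjoint_family_disjointed[of B]
    by (intro that[of I "disjointed B"]) (auto simp: I_def disjoint_family_on_def)
qed

lemma sum_indicator_le_near_diagonal:
  assumes "finite I" "disjoint_family_on Q I" "\<And>i x y. i \<in> I \<Longrightarrow> x \<in> Q i \<Longrightarrow> y \<in> Q i \<Longrightarrow> dist x y < \<delta>"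
  shows "(\<Sum>i\<in>I. indicator (Q i) x * indicator (Q i) y :: real) \<le> indicator {z. dist (fst z) (snd z) < \<delta>} (x, y)"
proof (cases "dist x y < \<delta>")
  case True
  have "(\<Sum>i\<in>I. indicator (Q i) x * indicator (Q i) y :: real) \<le> (\<Sum>i\<in>I. indicator (Q i) x)"
    by (intro sum_mono) (simp add: indicator_def)
  also have "\<dots> = indicator (\<Union>i\<in>I. Q i) x"
    by (rule indicator_UN_disjoint[OF assms(1,2), symmetric])
  also have "\<dots> \<le> 1"
    by (simp add: indicator_def)
  finally show ?thesis
    using True by simp
next
  case False
  then have "indicator (Q i) x * indicator (Q i) y = (0::real)" if "i \<in> I" for i
    using assms(3)[OF that, of x y] by (auto simp: indicator_def)
  then show ?thesis
    by (simp add: sum.neutral)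
qed

section \<open>Bounded compactly supported test functions\<close>

lemma bdd_compact_suppE:
  assumes "bdd_compact_supp L u"
  obtains A c where "compact A" "\<And>y. \<bar>u y\<bar> \<le> c" "\<And>y. y \<notin> A \<Longrightarrow> u y = 0" "0 \<le> c"
    "u \<in> borel_measurable L"
proof -
  obtain A where "compact A" "\<And>y. y \<notin> A \<Longrightarrow> u y = 0" "bounded (range u)"
    "u \<in> borel_measurable L"
    using assms unfolding bdd_compact_supp_def by blast
  moreover obtain c where "\<And>y. \<bar>u y\<bar> \<le> c"
    using \<open>bounded (range u)\<close> unfolding bounded_iff by auto
  moreover have "0 \<le> c"
    using abs_ge_zero order_trans calculation(5) by blast
  ultimately show ?thesis
    using that by blast
qed

lemma bdd_compact_suppI:
  assumes "u \<in> borel_measurable L" "\<And>y. \<bar>u y\<bar> \<le> c" "compact A" "\<And>y. y \<notin> A \<Longrightarrow> u y = 0"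
  shows "bdd_compact_supp L u"
  unfolding bdd_compact_supp_def bounded_iff using assms by auto

lemma bdd_compact_supp_mult_indicator:
  assumes "bdd_compact_supp L u" "E \<in> sets L"
  shows "bdd_compact_supp L (\<lambda>y. u y * indicator E y)"
proof -
  obtain A c where A: "compact A" "\<And>y. \<bar>u y\<bar> \<le> c" "\<And>y. y \<notin> A \<Longrightarrow> u y = 0" "0 \<le> c"
    and meas: "u \<in> borel_measurable L"
    using bdd_compact_suppE[OF assms(1)] by blast
  have "\<bar>u y * indicator E y\<bar> \<le> c" for y
    using A(2)[of y] A(4) by (simp add: indicator_def)
  then show ?thesis
    using A(1,3) borel_measurable_times[OF meas borel_measurable_indicator[OF assms(2)]]
    by (intro bdd_compact_suppI[where c=c and A=A]) auto
qed

lemma integrable_abs_powr_bdd_compact_supp: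
  assumes "radon_measure L" "bdd_compact_supp L u" "0 \<le> r"
  shows "integrable L (\<lambda>y. \<bar>u y\<bar> powr r)"
proof -
  obtain A c where A: "compact A" "\<And>y. \<bar>u y\<bar> \<le> c" "\<And>y. y \<notin> A \<Longrightarrow> u y = 0"
    and meas: "u \<in> borel_measurable L"
    using bdd_compact_suppE[OF assms(2)] by metis
  have "integrable L (\<lambda>y. c powr r * indicator A y)"
    using radon_measureD[OF assms(1)] A(1)
    by (intro integrable_mult_right integrable_real_indicator) (auto intro: borel_compact)
  moreover have "norm (\<bar>u y\<bar> powr r) \<le> norm (c powr r * indicator A y)" for y
    using A(2,3)[of y] powr_mono2[OF assms(3) abs_ge_zero A(2)] by (cases "y \<in> A") auto
  ultimately show ?thesis
    by (intro Bochner_Integration.integrable_bound[OF _ measurable_abs_powr[OF meas] AE_I2])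
qed

lemma Lp_norm_nonneg: "0 \<le> Lp_norm L r u"
  unfolding Lp_norm_def by simp

lemma Lp_norm_mono:
  assumes "u \<in> borel_measurable L" "\<And>y. \<bar>u y\<bar> \<le> \<bar>w y\<bar>" "integrable L (\<lambda>y. \<bar>w y\<bar> powr r)" "0 < r"
  shows "Lp_norm L r u \<le> Lp_norm L r w"
proof -
  have le: "\<bar>u y\<bar> powr r \<le> \<bar>w y\<bar> powr r" for y
    using assms(2,4) by (intro powr_mono2) auto
  then have "integrable L (\<lambda>y. \<bar>u y\<bar> powr r)"
    by (intro Bochner_Integration.integrable_bound[OF assms(3) measurable_abs_powr[OF assms(1)] AE_I2])
      simp
  then have "(\<integral>y. \<bar>u y\<bar> powr r \<partial>L) \<le> (\<integral>y. \<bar>w y\<bar> powr r \<partial>L)"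
    using assms(3) le by (rule integral_mono)
  then show ?thesis
    unfolding Lp_norm_def using assms(4) by (intro powr_mono2) auto
qed

lemma integral_abs_powr_split:
  fixes u :: "'a \<Rightarrow> real"
  assumes "integrable L (\<lambda>y. \<bar>u y\<bar> powr r)" "0 < r" "E1 \<in> sets L" "E2 \<in> sets L" "E1 \<inter> E2 = {}"
    "\<And>y. y \<notin> E1 \<union> E2 \<Longrightarrow> u y = 0"
  shows "(\<integral>y. \<bar>u y * indicator E1 y\<bar> powr r \<partial>L) + (\<integral>y. \<bar>u y * indicator E2 y\<bar> powr r \<partial>L)
    = (\<integral>y. \<bar>u y\<bar> powr r \<partial>L)"
proof -
  have restrict: "\<bar>u y * indicator E y\<bar> powr r = \<bar>u y\<bar> powr r * indicator E y" for y E
    using assms(2) by (auto simp: indicator_def)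
  have parts: "\<bar>u y\<bar> powr r * indicator E1 y + \<bar>u y\<bar> powr r * indicator E2 y = \<bar>u y\<bar> powr r" for y
    using assms(5) assms(6)[of y] by (auto simp: indicator_def)
  have "(\<integral>y. \<bar>u y\<bar> powr r * indicator E1 y \<partial>L) + (\<integral>y. \<bar>u y\<bar> powr r * indicator E2 y \<partial>L)
      = (\<integral>y. \<bar>u y\<bar> powr r * indicator E1 y + \<bar>u y\<bar> powr r * indicator E2 y \<partial>L)"
    using assms(1,3,4) by (intro Bochner_Integration.integral_add[symmetric] integrable_real_mult_indicator)
  then show ?thesis
    unfolding restrict parts .
qed

lemma conjugate_powr_sgn:
  fixes t m c p :: real
  assumes "1 < p" "0 \<le> m" "m \<le> \<bar>t\<bar>" "c = 0 \<or> c = 1"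
  shows "\<bar>sgn t * m powr (p - 1) * c\<bar> powr (p / (p - 1)) = m powr p * c"
    and "m powr p * c \<le> t * (sgn t * m powr (p - 1) * c)"
proof -
  have "m powr p = m powr 1 * m powr (p - 1)"
    using powr_add[of m 1 "p - 1"] by simp
  then have "m powr p \<le> \<bar>t\<bar> * m powr (p - 1)"
    using assms(2,3) by (simp add: mult_right_mono)
  moreover have "t * sgn t = \<bar>t\<bar>"
    by (simp add: abs_sgn mult.commute)
  ultimately show "m powr p * c \<le> t * (sgn t * m powr (p - 1) * c)"
    using assms(4) by (auto simp flip: mult.assoc)
  show "\<bar>sgn t * m powr (p - 1) * c\<bar> powr (p / (p - 1)) = m powr p * c"
    using assms by (cases "t = 0") (auto simp: abs_mult powr_powr sgn_if)
qed

lemma integrable_abs_powr_of_truncations: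
  fixes h :: "'a::real_normed_vector \<Rightarrow> real"
  assumes "h \<in> borel_measurable L" "0 < p"
    and "\<And>n. integrable L (\<lambda>x. min \<bar>h x\<bar> (real n) powr p * indicator (cball 0 (real n)) x)"
    and "\<And>n. (\<integral>x. min \<bar>h x\<bar> (real n) powr p * indicator (cball 0 (real n)) x \<partial>L) \<le> D"
  shows "integrable L (\<lambda>x. \<bar>h x\<bar> powr p)" and "(\<integral>x. \<bar>h x\<bar> powr p \<partial>L) \<le> D"
proof -
  define \<phi> where "\<phi> n x = min \<bar>h x\<bar> (real n) powr p * indicator (cball 0 (real n)) x" for n :: nat and x
  have mono: "\<phi> n x \<le> \<phi> (Suc n) x" for n x
    unfolding \<phi>_def using assms(2)
    by (intro mult_mono powr_mono2) (auto simp: indicator_def)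
  have pointwise: "(\<lambda>n. \<phi> n x) \<longlonglongrightarrow> \<bar>h x\<bar> powr p" for x
  proof (rule tendsto_eventually)
    obtain k :: nat where "max \<bar>h x\<bar> (norm x) \<le> real k"
      using real_arch_simple by blast
    then show "eventually (\<lambda>n. \<phi> n x = \<bar>h x\<bar> powr p) sequentially"
      unfolding \<phi>_def eventually_sequentially
      by (intro exI[of _ k] allI impI) (auto simp: min_def indicator_def)
  qed
  have integrable: "integrable L (\<phi> n)" for n
    unfolding \<phi>_def by (rule assms(3))
  have "incseq (\<lambda>n. integral\<^sup>L L (\<phi> n))"
    using integrable mono by (intro incseq_SucI integral_mono) auto
  then have limit: "(\<lambda>n. integral\<^sup>L L (\<phi> n)) \<longlonglongrightarrow> (SUP n. integral\<^sup>L L (\<phi> n))"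
    using assms(4) unfolding \<phi>_def by (intro LIMSEQ_incseq_SUP bdd_aboveI2)
  have "\<phi> n x \<ge> 0" for n x
    unfolding \<phi>_def by simp
  then have "integrable L (\<lambda>x. \<bar>h x\<bar> powr p) \<and> (\<integral>x. \<bar>h x\<bar> powr p \<partial>L) = (SUP n. integral\<^sup>L L (\<phi> n))"
    using integral_monotone_convergence_nonneg[OF integrable _ _ _ limit measurable_abs_powr[OF assms(1)]]
      mono pointwise by (simp add: mono_iff_le_Suc)
  moreover have "(SUP n. integral\<^sup>L L (\<phi> n)) \<le> D"
    using assms(4) unfolding \<phi>_def by (intro cSUP_least) auto
  ultimately show "integrable L (\<lambda>x. \<bar>h x\<bar> powr p)" "(\<integral>x. \<bar>h x\<bar> powr p \<partial>L) \<le> D"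
    by simp_all
qed

text \<open>Truncations of the extremal test function \<open>sgn h \<bar>h\<bar>\<^sup>p\<^sup>-\<^sup>1\<close> of the \<open>L\<^sup>p\<close>--\<open>L\<^sup>p\<^sup>'\<close> duality.\<close>

lemma truncated_dual_test_functions:
  fixes h :: "'a::euclidean_space \<Rightarrow> real"
  assumes L: "radon_measure L" and "1 < p" and h: "h \<in> borel_measurable L"
  obtains g where "\<And>n. bdd_compact_supp L (g n)"
    "\<And>n x. \<bar>g n x\<bar> powr (p / (p - 1)) = min \<bar>h x\<bar> (real n) powr p * indicator (cball 0 (real n)) x"
    "\<And>n x. min \<bar>h x\<bar> (real n) powr p * indicator (cball 0 (real n)) x \<le> h x * g n x"
proof -
  define m where "m n x = min \<bar>h x\<bar> (real n)" for n :: nat and x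
  define c where "c n = (indicator (cball 0 (real n)) :: 'a \<Rightarrow> real)" for n :: nat
  define g where "g n x = sgn (h x) * m n x powr (p - 1) * c n x" for n x
  have m: "0 \<le> m n x" "m n x \<le> \<bar>h x\<bar>" "m n x \<le> real n" for n x
    unfolding m_def by auto
  have "bdd_compact_supp L (g n)" for n
  proof (rule bdd_compact_suppI)
    show "g n \<in> borel_measurable L"
      unfolding g_def m_def c_def using L
      by (intro borel_measurable_times borel_measurable_sgn measurable_compose[OF h]
          powr_real_measurable borel_measurable_min borel_measurable_abs h borel_measurable_const
          borel_measurable_indicator) (simp_all add: radon_measure_sets)
    show "\<bar>g n x\<bar> \<le> real n powr (p - 1)" for x
      unfolding g_def c_def using \<open>1 < p\<close> m[of n x]
      by (auto simp: abs_mult abs_sgn_eq indicator_def intro: powr_mono2)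
    show "g n x = 0" if "x \<notin> cball 0 (real n)" for x
      using that unfolding g_def c_def by simp
  qed simp
  moreover have "c n x = 0 \<or> c n x = 1" for n x
    unfolding c_def by (simp add: indicator_def)
  ultimately show ?thesis
    using that[of g] conjugate_powr_sgn[OF \<open>1 < p\<close> m(1,2)] unfolding g_def m_def c_def by blast
qed

lemma memLp_of_dual_bound:
  fixes h :: "'a::euclidean_space \<Rightarrow> real"
  assumes L: "radon_measure L" and "1 < p" and h: "h \<in> borel_measurable L" and "0 \<le> B"
    and integrable: "\<And>g. bdd_compact_supp L g \<Longrightarrow> integrable L (\<lambda>x. h x * g x)"
    and bound: "\<And>g. bdd_compact_supp L g \<Longrightarrow> \<bar>\<integral>x. h x * g x \<partial>L\<bar> \<le> B * Lp_norm L (p / (p - 1)) g"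
  shows "memLp L p h \<and> Lp_norm L p h \<le> B"
proof -
  define q where "q = p / (p - 1)"
  have pq: "0 < p" "0 < q" "1 / p + 1 / q = 1"
    using \<open>1 < p\<close> unfolding q_def by (simp_all add: field_simps)
  define \<phi> where "\<phi> n x = min \<bar>h x\<bar> (real n) powr p * indicator (cball 0 (real n)) x" for n :: nat and x
  obtain g where g: "\<And>n. bdd_compact_supp L (g n)" and g_powr: "\<And>n x. \<bar>g n x\<bar> powr q = \<phi> n x"
    and \<phi>_le: "\<And>n x. \<phi> n x \<le> h x * g n x"
    using truncated_dual_test_functions[OF L \<open>1 < p\<close> h] unfolding \<phi>_def q_def by metis
  have integrable_\<phi>: "integrable L (\<phi> n)" for n
    using integrable_abs_powr_bdd_compact_supp[OF L g, of q n] pq(2) by (simp add: g_powr[abs_def])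
  have bound_\<phi>: "(\<integral>x. \<phi> n x \<partial>L) \<le> B powr p" for n
  proof (rule le_powr_of_le_mult_powr[OF _ \<open>0 \<le> B\<close> pq])
    show "0 \<le> (\<integral>x. \<phi> n x \<partial>L)"
      unfolding \<phi>_def by (intro integral_nonneg_AE AE_I2) simp
    have "(\<integral>x. \<phi> n x \<partial>L) \<le> (\<integral>x. h x * g n x \<partial>L)"
      using integrable_\<phi> integrable[OF g] \<phi>_le by (rule integral_mono)
    also have "\<dots> \<le> B * Lp_norm L q (g n)"
      unfolding q_def by (rule order_trans[OF abs_ge_self bound[OF g]])
    also have "Lp_norm L q (g n) = (\<integral>x. \<phi> n x \<partial>L) powr (1 / q)"
      unfolding Lp_norm_def g_powr ..
    finally show "(\<integral>x. \<phi> n x \<partial>L) \<le> B * (\<integral>x. \<phi> n x \<partial>L) powr (1 / q)" .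
  qed
  have "integrable L (\<lambda>x. \<bar>h x\<bar> powr p)"
    using integrable_\<phi> bound_\<phi> unfolding \<phi>_def by (rule integrable_abs_powr_of_truncations(1)[OF h pq(1)])
  moreover have le: "(\<integral>x. \<bar>h x\<bar> powr p \<partial>L) \<le> B powr p"
    using integrable_\<phi> bound_\<phi> unfolding \<phi>_def by (rule integrable_abs_powr_of_truncations(2)[OF h pq(1)])
  moreover have "Lp_norm L p h \<le> (B powr p) powr (1 / p)"
    unfolding Lp_norm_def using le pq(1) by (intro powr_mono2) simp_all
  moreover have "(B powr p) powr (1 / p) = B"
    using \<open>0 \<le> B\<close> pq(1) by (simp add: powr_powr)
  ultimately show ?thesis
    unfolding memLp_def using h by simp
qed

section \<open>Restrictedly bounded kernels\<close>

locale restricted_kernel =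
  fixes M N :: "'a::euclidean_space measure" and K :: "'a \<Rightarrow> 'a \<Rightarrow> real" and p C :: real
  assumes radon_M: "radon_measure M" and radon_N: "radon_measure N"
    and no_common_atoms_MN: "no_common_atoms M N"
    and p_gt_1: "1 < p"
    and kernel_loc_square_integrable: "loc_square_integrable N M K"
    and C_nonneg: "0 \<le> C"
    and kernel_restrictedly_bounded: "restrictedly_bounded M N p K C"
begin

lemmas sets_M = radon_measure_sets[OF radon_M]
lemmas sets_N = radon_measure_sets[OF radon_N]
lemmas space_M [simp] = radon_measure_space[OF radon_M]
lemmas space_N [simp] = radon_measure_space[OF radon_N]

sublocale M: sigma_finite_measure M
  by (rule sigma_finite_measure_radon[OF radon_M])

sublocale N: sigma_finite_measure N
  by (rule sigma_finite_measure_radon[OF radon_N])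

sublocale NM: pair_sigma_finite N M ..

lemma sets_NM: "sets (N \<Otimes>\<^sub>M M) = sets (borel :: ('a \<times> 'a) measure)"
  using sets_pair_measure_cong[OF sets_N sets_M] borel_prod by metis

lemma kernel_measurable [measurable]: "(\<lambda>z. K (fst z) (snd z)) \<in> borel_measurable (N \<Otimes>\<^sub>M M)"
  using kernel_loc_square_integrable by (simp add: loc_square_integrable_def)

lemma compact_in_sets_NM: "compact S \<Longrightarrow> S \<in> sets (N \<Otimes>\<^sub>M M)"
  unfolding sets_NM by (rule borel_compact)

lemma emeasure_NM_compact_finite:
  assumes "compact S"
  shows "emeasure (N \<Otimes>\<^sub>M M) S < \<infinity>"
proof -
  have "compact (fst ` S)" "compact (snd ` S)"
    using compact_continuous_image[OF continuous_on_fst[OF continuous_on_id] assms]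
      compact_continuous_image[OF continuous_on_snd[OF continuous_on_id] assms]
    by (simp_all add: image_def)
  moreover have "S \<subseteq> fst ` S \<times> snd ` S"
    by force
  ultimately have "emeasure (N \<Otimes>\<^sub>M M) S \<le> emeasure N (fst ` S) * emeasure M (snd ` S)"
    using emeasure_mono[of S "fst ` S \<times> snd ` S" "N \<Otimes>\<^sub>M M"]
    by (simp add: M.emeasure_pair_measure_Times sets_M sets_N borel_compact compact_in_sets_NM compact_Times)
  also have "\<dots> < \<infinity>"
    using radon_measure_compact_finite[OF radon_M] radon_measure_compact_finite[OF radon_N]
      \<open>compact (fst ` S)\<close> \<open>compact (snd ` S)\<close>
    by (simp add: ennreal_mult_less_top)
  finally show ?thesis .
qed

lemma integrable_kernel_on_compact:
  assumes "compact S"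
  shows "integrable (N \<Otimes>\<^sub>M M) (\<lambda>z. indicator S z * K (fst z) (snd z))"
proof -
  have S: "S \<in> sets (N \<Otimes>\<^sub>M M)"
    using compact_in_sets_NM[OF assms] .
  have bound_integrable:
    "integrable (N \<Otimes>\<^sub>M M) (\<lambda>z. indicator S z + indicator S z * (K (fst z) (snd z))\<^sup>2)"
    using kernel_loc_square_integrable assms emeasure_NM_compact_finite[OF assms] S
    by (intro Bochner_Integration.integrable_add)
      (simp_all add: loc_square_integrable_def set_integrable_def)
  have "\<bar>k\<bar> \<le> 1 + k\<^sup>2" for k :: real
  proof -
    have "0 \<le> (\<bar>k\<bar> - 1/2)\<^sup>2"
      by simp
    also have "\<dots> = k\<^sup>2 - \<bar>k\<bar> + 1/4"
      by (simp add: power2_eq_square algebra_simps)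
    finally show ?thesis
      by linarith
  qed
  then have "norm (indicator S z * K (fst z) (snd z))
      \<le> norm (indicator S z + indicator S z * (K (fst z) (snd z))\<^sup>2)" for z
    by (cases "z \<in> S") auto
  then show ?thesis
    by (intro Bochner_Integration.integrable_bound[OF bound_integrable _ AE_I2]
        borel_measurable_times[OF borel_measurable_indicator[OF S] kernel_measurable])
qed

text \<open>\<open>pairing u v = \<langle>T u, v\<rangle>\<close>; points of \<open>N \<Otimes>\<^sub>M M\<close> are pairs \<open>(x, y)\<close> with \<open>x\<close> in the target space.\<close>

definition pairing :: "('a \<Rightarrow> real) \<Rightarrow> ('a \<Rightarrow> real) \<Rightarrow> real" where
  "pairing u v = (\<integral>x. (\<integral>y. K x y * u y \<partial>M) * v x \<partial>N)"

definition pairing_density :: "('a \<Rightarrow> real) \<Rightarrow> ('a \<Rightarrow> real) \<Rightarrow> 'a \<times> 'a \<Rightarrow> real" where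
  "pairing_density u v z = K (fst z) (snd z) * u (snd z) * v (fst z)"

lemma pairing_density_measurable:
  assumes "u \<in> borel_measurable M" "v \<in> borel_measurable N"
  shows "pairing_density u v \<in> borel_measurable (N \<Otimes>\<^sub>M M)"
  unfolding pairing_density_def[abs_def]
  by (intro borel_measurable_times kernel_measurable measurable_compose[OF measurable_snd assms(1)]
      measurable_compose[OF measurable_fst assms(2)])

lemma abs_pairing_density_le:
  assumes "\<And>y. \<bar>u y\<bar> \<le> cu" "\<And>y. y \<notin> A \<Longrightarrow> u y = 0" "\<And>x. \<bar>v x\<bar> \<le> cv" "\<And>x. x \<notin> B \<Longrightarrow> v x = 0"
  shows "\<bar>pairing_density u v z\<bar> \<le> cu * cv * \<bar>indicator (B \<times> A) z * K (fst z) (snd z)\<bar>"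
proof (cases "z \<in> B \<times> A")
  case True
  have "\<bar>u (snd z) * v (fst z)\<bar> \<le> cu * cv"
    using mult_mono[OF assms(1) assms(3) _ abs_ge_zero] assms(1)[of "snd z"] by (simp add: abs_mult)
  then have "\<bar>u (snd z) * v (fst z)\<bar> * \<bar>K (fst z) (snd z)\<bar> \<le> cu * cv * \<bar>K (fst z) (snd z)\<bar>"
    by (rule mult_right_mono) simp
  then show ?thesis
    using True by (simp add: pairing_density_def abs_mult mult_ac)
next
  case False
  then have "u (snd z) = 0 \<or> v (fst z) = 0"
    using assms(2,4) by (cases z) auto
  then show ?thesis
    using False by (auto simp: pairing_density_def)
qed

lemma integrable_pairing_density:
  assumes "bdd_compact_supp M u" "bdd_compact_supp N v"
  shows "integrable (N \<Otimes>\<^sub>M M) (pairing_density u v)"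
proof -
  obtain A cu where A: "compact A" "\<And>y. \<bar>u y\<bar> \<le> cu" "\<And>y. y \<notin> A \<Longrightarrow> u y = 0" "0 \<le> cu"
    and u: "u \<in> borel_measurable M"
    using bdd_compact_suppE[OF assms(1)] by metis
  obtain B cv where B: "compact B" "\<And>x. \<bar>v x\<bar> \<le> cv" "\<And>x. x \<notin> B \<Longrightarrow> v x = 0" "0 \<le> cv"
    and v: "v \<in> borel_measurable N"
    using bdd_compact_suppE[OF assms(2)] by metis
  have "integrable (N \<Otimes>\<^sub>M M) (\<lambda>z. cu * cv * \<bar>indicator (B \<times> A) z * K (fst z) (snd z)\<bar>)"
    by (intro integrable_mult_right integrable_abs integrable_kernel_on_compact compact_Times A(1) B(1))
  then show ?thesis
  proof (rule Bochner_Integration.integrable_bound[OF _ pairing_density_measurable[OF u v] AE_I2])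
    fix z
    have "\<bar>pairing_density u v z\<bar> \<le> cu * cv * \<bar>indicator (B \<times> A) z * K (fst z) (snd z)\<bar>"
      by (rule abs_pairing_density_le) (use A B in auto)
    then show "norm (pairing_density u v z) \<le> norm (cu * cv * \<bar>indicator (B \<times> A) z * K (fst z) (snd z)\<bar>)"
      using A(4) B(4) by (simp add: abs_mult)
  qed
qed

lemma pairing_eq_integral:
  assumes "bdd_compact_supp M u" "bdd_compact_supp N v"
  shows "pairing u v = integral\<^sup>L (N \<Otimes>\<^sub>M M) (pairing_density u v)"
  using NM.integral_fst'[OF integrable_pairing_density[OF assms]]
  by (simp add: pairing_def pairing_density_def)

lemma integrable_kernel_transform_mult:
  assumes "bdd_compact_supp M u" "bdd_compact_supp N v"
  shows "integrable N (\<lambda>x. (\<integral>y. K x y * u y \<partial>M) * v x)"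
  using NM.integrable_fst'[OF integrable_pairing_density[OF assms]]
  by (simp add: pairing_density_def)

lemma kernel_transform_measurable:
  assumes "w \<in> borel_measurable M"
  shows "(\<lambda>x. \<integral>y. K x y * w y \<partial>M) \<in> borel_measurable N"
  using M.borel_measurable_lebesgue_integral[where f="\<lambda>x y. K x y * w y" and N=N]
    borel_measurable_times[OF kernel_measurable measurable_compose[OF measurable_snd assms]]
  by (simp add: split_beta')

lemma pairing_cong_AE:
  assumes "u \<in> borel_measurable M" "u' \<in> borel_measurable M" "AE y in M. u y = u' y"
    and "v \<in> borel_measurable N" "v' \<in> borel_measurable N" "AE x in N. v x = v' x"
  shows "pairing u v = pairing u' v'"
proof -
  have "(\<lambda>y. K x y * w y) \<in> borel_measurable M" if "w \<in> borel_measurable M" for x w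
    using measurable_Pair2[OF kernel_measurable, of x] that by simp
  then have "(\<integral>y. K x y * u y \<partial>M) = (\<integral>y. K x y * u' y \<partial>M)" for x
    using assms(1-3) by (intro integral_cong_AE) auto
  then show ?thesis
    unfolding pairing_def using assms(6)
    by (intro integral_cong_AE borel_measurable_times kernel_transform_measurable assms(1,2,4,5)) auto
qed

lemma pairing_compact_bound:
  assumes "bdd_compact_supp M u" "bdd_compact_supp N v" "compact A" "compact B" "A \<inter> B = {}"
    "\<And>y. y \<notin> A \<Longrightarrow> u y = 0" "\<And>x. x \<notin> B \<Longrightarrow> v x = 0"
  shows "\<bar>pairing u v\<bar> \<le> C * Lp_norm M p u * Lp_norm N (p / (p - 1)) v"
  using kernel_restrictedly_bounded assms
  unfolding restrictedly_bounded_def pairing_def bdd_compact_supp_def by blast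

lemma pairing_compact_restrict_bound:
  assumes "bdd_compact_supp M u" "bdd_compact_supp N v" "compact U" "compact V" "U \<inter> V = {}"
  shows "\<bar>pairing (\<lambda>y. u y * indicator U y) (\<lambda>x. v x * indicator V x)\<bar>
    \<le> C * Lp_norm M p u * Lp_norm N (p / (p - 1)) v"
proof -
  have bcs: "bdd_compact_supp M (\<lambda>y. u y * indicator U y)" "bdd_compact_supp N (\<lambda>x. v x * indicator V x)"
    using assms(3,4) by (simp_all add: bdd_compact_supp_mult_indicator assms(1,2) sets_M sets_N borel_compact)
  have "Lp_norm M p (\<lambda>y. u y * indicator U y) \<le> Lp_norm M p u"
    using bcs p_gt_1 integrable_abs_powr_bdd_compact_supp[OF radon_M assms(1)]
    by (intro Lp_norm_mono) (auto simp: abs_mult indicator_def bdd_compact_supp_def)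
  moreover have "Lp_norm N (p / (p - 1)) (\<lambda>x. v x * indicator V x) \<le> Lp_norm N (p / (p - 1)) v"
    using bcs p_gt_1 integrable_abs_powr_bdd_compact_supp[OF radon_N assms(2)]
    by (intro Lp_norm_mono) (auto simp: abs_mult indicator_def bdd_compact_supp_def)
  moreover have "\<bar>pairing (\<lambda>y. u y * indicator U y) (\<lambda>x. v x * indicator V x)\<bar>
      \<le> C * Lp_norm M p (\<lambda>y. u y * indicator U y) * Lp_norm N (p / (p - 1)) (\<lambda>x. v x * indicator V x)"
    using assms(3-5) by (intro pairing_compact_bound[OF bcs]) auto
  ultimately show ?thesis
    by (meson C_nonneg Lp_norm_nonneg mult_mono mult_left_mono mult_nonneg_nonneg order_trans)
qed

lemma pairing_tendsto_incseq:
  assumes "bdd_compact_supp M u" "bdd_compact_supp N v"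
    and "incseq U" "\<And>n. U n \<in> sets borel" "incseq V" "\<And>n. V n \<in> sets borel"
  shows "(\<lambda>n. pairing (\<lambda>y. u y * indicator (U n) y) (\<lambda>x. v x * indicator (V n) x))
    \<longlonglongrightarrow> pairing (\<lambda>y. u y * indicator (\<Union>n. U n) y) (\<lambda>x. v x * indicator (\<Union>n. V n) x)"
proof -
  obtain A cu where A: "compact A" "\<And>y. \<bar>u y\<bar> \<le> cu" "\<And>y. y \<notin> A \<Longrightarrow> u y = 0" "0 \<le> cu"
    and u: "u \<in> borel_measurable M"
    using bdd_compact_suppE[OF assms(1)] by metis
  obtain B cv where B: "compact B" "\<And>x. \<bar>v x\<bar> \<le> cv" "\<And>x. x \<notin> B \<Longrightarrow> v x = 0" "0 \<le> cv"
    and v: "v \<in> borel_measurable N"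
    using bdd_compact_suppE[OF assms(2)] by metis
  define un where "un n y = u y * indicator (U n) y" for n y
  define vn where "vn n x = v x * indicator (V n) x" for n x
  define ui where "ui y = u y * indicator (\<Union>n. U n) y" for y
  define vi where "vi x = v x * indicator (\<Union>n. V n) x" for x
  have sets: "U n \<in> sets M" "(\<Union>n. U n) \<in> sets M" "V n \<in> sets N" "(\<Union>n. V n) \<in> sets N" for n
    using assms(4,6) by (auto simp: sets_M sets_N)
  have bcs: "bdd_compact_supp M (un n)" "bdd_compact_supp N (vn n)"
    "bdd_compact_supp M ui" "bdd_compact_supp N vi" for n
    unfolding un_def vn_def ui_def vi_def
    using assms(1,2) sets by (auto intro: bdd_compact_supp_mult_indicator)
  have meas: "un n \<in> borel_measurable M" "vn n \<in> borel_measurable N"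
    "ui \<in> borel_measurable M" "vi \<in> borel_measurable N" for n
    using bcs unfolding bdd_compact_supp_def by blast+
  have "(\<lambda>n. integral\<^sup>L (N \<Otimes>\<^sub>M M) (pairing_density (un n) (vn n)))
      \<longlonglongrightarrow> integral\<^sup>L (N \<Otimes>\<^sub>M M) (pairing_density ui vi)"
  proof (rule integral_dominated_convergence
      [where w="\<lambda>z. cu * cv * \<bar>indicator (B \<times> A) z * K (fst z) (snd z)\<bar>"])
    show "integrable (N \<Otimes>\<^sub>M M) (\<lambda>z. cu * cv * \<bar>indicator (B \<times> A) z * K (fst z) (snd z)\<bar>)"
      by (intro integrable_mult_right integrable_abs integrable_kernel_on_compact compact_Times A(1) B(1))
    show "AE z in N \<Otimes>\<^sub>M M. (\<lambda>n. pairing_density (un n) (vn n) z) \<longlonglongrightarrow> pairing_density ui vi z"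
      unfolding pairing_density_def un_def vn_def ui_def vi_def
      by (intro AE_I2 tendsto_intros LIMSEQ_indicator_incseq assms(3,5))
    show "AE z in N \<Otimes>\<^sub>M M. norm (pairing_density (un n) (vn n) z)
        \<le> cu * cv * \<bar>indicator (B \<times> A) z * K (fst z) (snd z)\<bar>" for n
    proof (rule AE_I2)
      fix z
      have "\<bar>pairing_density (un n) (vn n) z\<bar> \<le> cu * cv * \<bar>indicator (B \<times> A) z * K (fst z) (snd z)\<bar>"
        by (rule abs_pairing_density_le)
          (use A B in \<open>auto simp: un_def vn_def indicator_def abs_mult\<close>)
      then show "norm (pairing_density (un n) (vn n) z)
          \<le> cu * cv * \<bar>indicator (B \<times> A) z * K (fst z) (snd z)\<bar>"
        by simp
    qed
  qed (auto intro: pairing_density_measurable meas)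
  then show ?thesis
    using pairing_eq_integral bcs unfolding un_def vn_def ui_def vi_def by simp
qed

lemma pairing_disjoint_bound:
  assumes "bdd_compact_supp M u" "bdd_compact_supp N v"
    and "E \<in> sets borel" "F \<in> sets borel" "E \<inter> F = {}"
    and "\<And>y. y \<notin> E \<Longrightarrow> u y = 0" "\<And>x. x \<notin> F \<Longrightarrow> v x = 0"
  shows "\<bar>pairing u v\<bar> \<le> C * Lp_norm M p u * Lp_norm N (p / (p - 1)) v"
proof -
  obtain A cu where A: "compact A" "\<And>y. \<bar>u y\<bar> \<le> cu" "\<And>y. y \<notin> A \<Longrightarrow> u y = 0"
    and u: "u \<in> borel_measurable M"
    using bdd_compact_suppE[OF assms(1)] by metis
  obtain B cv where B: "compact B" "\<And>x. \<bar>v x\<bar> \<le> cv" "\<And>x. x \<notin> B \<Longrightarrow> v x = 0"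
    and v: "v \<in> borel_measurable N"
    using bdd_compact_suppE[OF assms(2)] by metis
  obtain U where U: "\<And>n. compact (U n)" "\<And>n. U n \<subseteq> E \<inter> A" "incseq U"
    and U_null: "E \<inter> A - (\<Union>n. U n) \<in> null_sets M"
    using radon_incseq_compact_exhaustion[OF radon_M assms(3) A(1)] by metis
  obtain V where V: "\<And>n. compact (V n)" "\<And>n. V n \<subseteq> F \<inter> B" "incseq V"
    and V_null: "F \<inter> B - (\<Union>n. V n) \<in> null_sets N"
    using radon_incseq_compact_exhaustion[OF radon_N assms(4) B(1)] by metis
  define un where "un n y = u y * indicator (U n) y" for n y
  define vn where "vn n x = v x * indicator (V n) x" for n x
  have bound: "\<bar>pairing (un n) (vn n)\<bar> \<le> C * Lp_norm M p u * Lp_norm N (p / (p - 1)) v" for n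
    unfolding un_def vn_def using U(1,2) V(1,2) assms(5)
    by (intro pairing_compact_restrict_bound assms(1,2)) blast+
  have "(\<lambda>n. pairing (un n) (vn n))
      \<longlonglongrightarrow> pairing (\<lambda>y. u y * indicator (\<Union>n. U n) y) (\<lambda>x. v x * indicator (\<Union>n. V n) x)"
    unfolding un_def vn_def
    using U(1,3) V(1,3) by (intro pairing_tendsto_incseq assms(1,2) borel_compact)
  also have "pairing (\<lambda>y. u y * indicator (\<Union>n. U n) y) (\<lambda>x. v x * indicator (\<Union>n. V n) x)
      = pairing u v"
  proof (rule pairing_cong_AE)
    show "AE y in M. u y * indicator (\<Union>n. U n) y = u y"
      using AE_not_in[OF U_null] by eventually_elim (use A(3) assms(6) in \<open>auto simp: indicator_def\<close>)
    show "AE x in N. v x * indicator (\<Union>n. V n) x = v x"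
      using AE_not_in[OF V_null] by eventually_elim (use B(3) assms(7) in \<open>auto simp: indicator_def\<close>)
    show "(\<lambda>y. u y * indicator (\<Union>n. U n) y) \<in> borel_measurable M"
      "(\<lambda>x. v x * indicator (\<Union>n. V n) x) \<in> borel_measurable N"
      using u v U(1) V(1) by (auto intro!: borel_measurable_times borel_measurable_indicator
          sets.countable_UN simp: sets_M sets_N borel_compact)
  qed (use u v in auto)
  finally show ?thesis
    using bound by (intro LIMSEQ_le_const2[OF tendsto_rabs]) auto
qed

lemma pairing_swap_bound:
  assumes f: "bdd_compact_supp M f" and g: "bdd_compact_supp N g"
    and "E \<in> sets borel" "F \<in> sets borel" "E \<inter> F = {}"
    and "\<And>y. y \<notin> E \<union> F \<Longrightarrow> f y = 0" "\<And>x. x \<notin> E \<union> F \<Longrightarrow> g x = 0"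
  shows "\<bar>pairing (\<lambda>y. f y * indicator E y) (\<lambda>x. g x * indicator F x)
      + pairing (\<lambda>y. f y * indicator F y) (\<lambda>x. g x * indicator E x)\<bar>
    \<le> C * Lp_norm M p f * Lp_norm N (p / (p - 1)) g"
proof -
  define q where "q = p / (p - 1)"
  have pq: "0 < p" "0 < q" "1 / p + 1 / q = 1"
    using p_gt_1 unfolding q_def by (simp_all add: field_simps)
  define a1 a2 where "a1 = (\<integral>y. \<bar>f y * indicator E y\<bar> powr p \<partial>M)"
    and "a2 = (\<integral>y. \<bar>f y * indicator F y\<bar> powr p \<partial>M)"
  define b1 b2 where "b1 = (\<integral>x. \<bar>g x * indicator F x\<bar> powr q \<partial>N)"
    and "b2 = (\<integral>x. \<bar>g x * indicator E x\<bar> powr q \<partial>N)"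
  have sets: "E \<in> sets M" "F \<in> sets M" "E \<in> sets N" "F \<in> sets N"
    using assms(3,4) by (simp_all add: sets_M sets_N)
  have bcs: "bdd_compact_supp M (\<lambda>y. f y * indicator E y)" "bdd_compact_supp M (\<lambda>y. f y * indicator F y)"
    "bdd_compact_supp N (\<lambda>x. g x * indicator E x)" "bdd_compact_supp N (\<lambda>x. g x * indicator F x)"
    using sets by (simp_all add: bdd_compact_supp_mult_indicator f g)
  have sum_a: "a1 + a2 = (\<integral>y. \<bar>f y\<bar> powr p \<partial>M)"
    unfolding a1_def a2_def
    using integral_abs_powr_split[OF integrable_abs_powr_bdd_compact_supp[OF radon_M f]
        pq(1) sets(1,2) assms(5,6)] pq(1) by simp
  have sum_b: "b2 + b1 = (\<integral>x. \<bar>g x\<bar> powr q \<partial>N)"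
    unfolding b1_def b2_def
    using integral_abs_powr_split[OF integrable_abs_powr_bdd_compact_supp[OF radon_N g]
        pq(2) sets(3,4) assms(5,7)] pq(2) by simp
  have bound1: "\<bar>pairing (\<lambda>y. f y * indicator E y) (\<lambda>x. g x * indicator F x)\<bar>
      \<le> C * (a1 powr (1/p) * b1 powr (1/q))"
    using pairing_disjoint_bound[OF bcs(1,4) assms(3,4,5)]
    unfolding a1_def b1_def q_def Lp_norm_def by (simp add: mult.assoc)
  have bound2: "\<bar>pairing (\<lambda>y. f y * indicator F y) (\<lambda>x. g x * indicator E x)\<bar>
      \<le> C * (a2 powr (1/p) * b2 powr (1/q))"
    using pairing_disjoint_bound[OF bcs(2,3) assms(4,3)] assms(5)
    unfolding a2_def b2_def q_def Lp_norm_def by (simp add: mult.assoc Int_commute)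
  have "a1 powr (1/p) * b1 powr (1/q) + a2 powr (1/p) * b2 powr (1/q)
      \<le> (a1 + a2) powr (1/p) * (b1 + b2) powr (1/q)"
    using pq unfolding a1_def a2_def b1_def b2_def
    by (intro Hoelder_inequality_two_terms) simp_all
  then have "C * (a1 powr (1/p) * b1 powr (1/q)) + C * (a2 powr (1/p) * b2 powr (1/q))
      \<le> C * ((a1 + a2) powr (1/p) * (b1 + b2) powr (1/q))"
    using C_nonneg by (simp add: distrib_left[symmetric] mult_left_mono)
  then show ?thesis
    using bound1 bound2 sum_a sum_b abs_triangle_ineq
    unfolding Lp_norm_def q_def[symmetric] by (simp add: add.commute mult.assoc)
qed

lemma pairing_density_sum:
  assumes "finite S" "finite T" "disjoint_family_on Q S" "disjoint_family_on Q T"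
  shows "pairing_density (\<lambda>y. f y * indicator (\<Union>i\<in>S. Q i) y) (\<lambda>x. g x * indicator (\<Union>j\<in>T. Q j) x) z
    = (\<Sum>i\<in>S. \<Sum>j\<in>T. pairing_density (\<lambda>y. f y * indicator (Q i) y) (\<lambda>x. g x * indicator (Q j) x) z)"
  unfolding pairing_density_def indicator_UN_disjoint[OF assms(1,3)] indicator_UN_disjoint[OF assms(2,4)]
  by (simp add: sum_distrib_left sum_distrib_right mult_ac)

lemma pairing_sum:
  assumes f: "bdd_compact_supp M f" and g: "bdd_compact_supp N g"
    and "finite S" "finite T" "disjoint_family_on Q S" "disjoint_family_on Q T"
    and Q: "\<And>i. i \<in> S \<union> T \<Longrightarrow> Q i \<in> sets borel"
  shows "pairing (\<lambda>y. f y * indicator (\<Union>i\<in>S. Q i) y) (\<lambda>x. g x * indicator (\<Union>j\<in>T. Q j) x)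
    = (\<Sum>i\<in>S. \<Sum>j\<in>T. pairing (\<lambda>y. f y * indicator (Q i) y) (\<lambda>x. g x * indicator (Q j) x))"
proof -
  have bcs: "bdd_compact_supp M (\<lambda>y. f y * indicator E y)" "bdd_compact_supp N (\<lambda>x. g x * indicator E x)"
    if "E \<in> sets borel" for E
    using that by (simp_all add: bdd_compact_supp_mult_indicator f g sets_M sets_N)
  have "(\<Union>i\<in>S. Q i) \<in> sets borel" "(\<Union>j\<in>T. Q j) \<in> sets borel"
    using Q assms(3,4) by (auto intro: sets.finite_UN)
  then have "pairing (\<lambda>y. f y * indicator (\<Union>i\<in>S. Q i) y) (\<lambda>x. g x * indicator (\<Union>j\<in>T. Q j) x)
    = integral\<^sup>L (N \<Otimes>\<^sub>M M) (\<lambda>z. \<Sum>i\<in>S. \<Sum>j\<in>T.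
        pairing_density (\<lambda>y. f y * indicator (Q i) y) (\<lambda>x. g x * indicator (Q j) x) z)"
    using bcs by (simp add: pairing_eq_integral pairing_density_sum[OF assms(3-6), abs_def])
  also have "\<dots> = (\<Sum>i\<in>S. \<Sum>j\<in>T. integral\<^sup>L (N \<Otimes>\<^sub>M M)
      (pairing_density (\<lambda>y. f y * indicator (Q i) y) (\<lambda>x. g x * indicator (Q j) x)))"
    using Q bcs
    by (simp add: Bochner_Integration.integral_sum Bochner_Integration.integrable_sum integrable_pairing_density)
  also have "\<dots> = (\<Sum>i\<in>S. \<Sum>j\<in>T. pairing (\<lambda>y. f y * indicator (Q i) y) (\<lambda>x. g x * indicator (Q j) x))"
    using Q bcs by (simp add: pairing_eq_integral)
  finally show ?thesis .
qed

lemma pairing_cut_bound: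
  assumes f: "bdd_compact_supp M f" and g: "bdd_compact_supp N g"
    and I: "finite I" and disj: "disjoint_family_on Q I" and Q: "\<And>i. i \<in> I \<Longrightarrow> Q i \<in> sets borel"
    and supp: "\<And>y. y \<notin> (\<Union>i\<in>I. Q i) \<Longrightarrow> f y = 0" "\<And>x. x \<notin> (\<Union>i\<in>I. Q i) \<Longrightarrow> g x = 0"
    and "S \<subseteq> I"
  shows "\<bar>\<Sum>i\<in>S. \<Sum>j\<in>I - S. pairing (\<lambda>y. f y * indicator (Q i) y) (\<lambda>x. g x * indicator (Q j) x)
      + pairing (\<lambda>y. f y * indicator (Q j) y) (\<lambda>x. g x * indicator (Q i) x)\<bar>
    \<le> C * Lp_norm M p f * Lp_norm N (p / (p - 1)) g"
proof -
  define a where "a i j = pairing (\<lambda>y. f y * indicator (Q i) y) (\<lambda>x. g x * indicator (Q j) x)" for i j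
  define E F where "E = (\<Union>i\<in>S. Q i)" and "F = (\<Union>j\<in>I - S. Q j)"
  have fin: "finite S" "finite (I - S)"
    using I \<open>S \<subseteq> I\<close> finite_subset by auto
  have disj': "disjoint_family_on Q S" "disjoint_family_on Q (I - S)"
    using disj \<open>S \<subseteq> I\<close> by (auto intro: disjoint_family_on_mono)
  have Q': "\<And>i. i \<in> S \<union> (I - S) \<Longrightarrow> Q i \<in> sets borel" "\<And>i. i \<in> (I - S) \<union> S \<Longrightarrow> Q i \<in> sets borel"
    using Q \<open>S \<subseteq> I\<close> by auto
  have EF: "E \<in> sets borel" "F \<in> sets borel"
    unfolding E_def F_def using fin Q \<open>S \<subseteq> I\<close> by (auto intro!: sets.finite_UN)
  have EF_disj: "E \<inter> F = {}"
    unfolding E_def F_def using disj \<open>S \<subseteq> I\<close> by (fastforce simp: disjoint_family_on_def)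
  have "E \<union> F = (\<Union>i\<in>I. Q i)"
    unfolding E_def F_def using \<open>S \<subseteq> I\<close> by auto
  then have supp': "\<And>y. y \<notin> E \<union> F \<Longrightarrow> f y = 0" "\<And>x. x \<notin> E \<union> F \<Longrightarrow> g x = 0"
    using supp by auto
  have "pairing (\<lambda>y. f y * indicator E y) (\<lambda>x. g x * indicator F x) = (\<Sum>i\<in>S. \<Sum>j\<in>I - S. a i j)"
    unfolding E_def F_def a_def by (rule pairing_sum[OF f g fin disj' Q'(1)])
  moreover have "pairing (\<lambda>y. f y * indicator F y) (\<lambda>x. g x * indicator E x) = (\<Sum>j\<in>I - S. \<Sum>i\<in>S. a j i)"
    unfolding E_def F_def a_def by (rule pairing_sum[OF f g fin(2,1) disj'(2,1) Q'(2)])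
  ultimately have eq: "(\<Sum>i\<in>S. \<Sum>j\<in>I - S. a i j + a j i)
      = pairing (\<lambda>y. f y * indicator E y) (\<lambda>x. g x * indicator F x)
        + pairing (\<lambda>y. f y * indicator F y) (\<lambda>x. g x * indicator E x)"
    by (simp add: sum.distrib sum.swap[of _ S])
  show ?thesis
    using pairing_swap_bound[OF f g EF EF_disj supp'] eq unfolding a_def by simp
qed

lemma diagonal_null_sets: "{z. fst z = snd z} \<in> null_sets (N \<Otimes>\<^sub>M M)"
proof -
  have diag: "{z. fst z = snd z} \<in> sets (N \<Otimes>\<^sub>M M)"
    unfolding sets_NM by (intro borel_closed closed_Collect_eq continuous_intros)
  have "AE x in N. \<forall>y\<in>{y. emeasure M {y} \<noteq> 0}. x \<noteq> y"
  proof (rule AE_ball_countable'[OF _ countable_atoms_radon[OF radon_M]])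
    fix y
    assume "y \<in> {y. emeasure M {y} \<noteq> 0}"
    then have "{y} \<in> null_sets N"
      using no_common_atoms_MN by (auto simp: no_common_atoms_def null_sets_def sets_N)
    then show "AE x in N. x \<noteq> y"
      using AE_not_in by force
  qed
  then have "AE x in N. emeasure M (Pair x -` {z. fst z = snd z}) = 0"
    by eventually_elim (auto simp: vimage_def)
  then have "emeasure (N \<Otimes>\<^sub>M M) {z. fst z = snd z} = (\<integral>\<^sup>+x. 0 \<partial>N)"
    unfolding M.emeasure_pair_measure_alt[OF diag] by (rule nn_integral_cong_AE)
  then show ?thesis
    using diag by (simp add: null_sets_def)
qed

lemma kernel_near_diagonal_small:
  assumes "compact S" "0 < e"
  obtains \<delta> where "0 < \<delta>"
    "(\<integral>z. indicator S z * indicator {z. dist (fst z) (snd z) < \<delta>} z * \<bar>K (fst z) (snd z)\<bar> \<partial>(N \<Otimes>\<^sub>M M)) < e"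
proof -
  define D where "D n = {z :: 'a \<times> 'a. dist (fst z) (snd z) < 1 / (real n + 1)}" for n :: nat
  have D_sets: "D n \<in> sets (N \<Otimes>\<^sub>M M)" for n
    unfolding sets_NM D_def by (intro borel_open open_Collect_less continuous_intros)
  have "decseq D"
    unfolding D_def decseq_def by (auto elim!: less_le_trans intro!: divide_left_mono)
  have "(\<Inter>n. D n) \<subseteq> {z. fst z = snd z}"
  proof
    fix z
    assume z: "z \<in> (\<Inter>n. D n)"
    show "z \<in> {z. fst z = snd z}"
    proof (rule ccontr)
      assume "z \<notin> {z. fst z = snd z}"
      then have "0 < dist (fst z) (snd z)"
        by simp
      then obtain n :: nat where "1 / (real n + 1) < dist (fst z) (snd z)"
        using nat_approx_posE by (metis of_nat_Suc add.commute)
      moreover have "z \<in> D n"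
        using z by blast
      ultimately show False
        unfolding D_def by simp
    qed
  qed
  then have null: "(\<Inter>n. D n) \<in> null_sets (N \<Otimes>\<^sub>M M)"
    using diagonal_null_sets D_sets by (blast intro: null_sets_subset sets.countable_INT')
  have integrable: "integrable (N \<Otimes>\<^sub>M M) (\<lambda>z. \<bar>indicator S z * K (fst z) (snd z)\<bar>)"
    by (intro integrable_abs integrable_kernel_on_compact assms(1))
  have "(\<lambda>n. \<integral>z. indicator S z * indicator (D n) z * \<bar>K (fst z) (snd z)\<bar> \<partial>(N \<Otimes>\<^sub>M M))
      \<longlonglongrightarrow> (\<integral>z. indicator S z * indicator (\<Inter>n. D n) z * \<bar>K (fst z) (snd z)\<bar> \<partial>(N \<Otimes>\<^sub>M M))"
    using compact_in_sets_NM[OF assms(1)] D_sets null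
    by (intro integral_dominated_convergence[OF _ _ integrable] AE_I2 tendsto_intros
        LIMSEQ_indicator_decseq[OF \<open>decseq D\<close>]) (auto simp: indicator_def abs_mult)
  also have "(\<integral>z. indicator S z * indicator (\<Inter>n. D n) z * \<bar>K (fst z) (snd z)\<bar> \<partial>(N \<Otimes>\<^sub>M M)) = 0"
    using AE_not_in[OF null] null_setsD2[OF null] compact_in_sets_NM[OF assms(1)]
    by (subst integral_cong_AE[where g="\<lambda>_. 0"])
      (auto intro!: borel_measurable_times borel_measurable_indicator borel_measurable_abs kernel_measurable)
  finally have "eventually (\<lambda>n. (\<integral>z. indicator S z * indicator (D n) z * \<bar>K (fst z) (snd z)\<bar> \<partial>(N \<Otimes>\<^sub>M M)) < e)
      sequentially"
    using assms(2) by (rule order_tendstoD(2))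
  then obtain n where "(\<integral>z. indicator S z * indicator (D n) z * \<bar>K (fst z) (snd z)\<bar> \<partial>(N \<Otimes>\<^sub>M M)) < e"
    by (auto simp: eventually_sequentially)
  then show ?thesis
    unfolding D_def by (intro that[of "1 / (real n + 1)"]) auto
qed

lemma pairing_diagonal_bound:
  assumes f: "bdd_compact_supp M f" and g: "bdd_compact_supp N g"
    and A: "compact A" "\<And>y. \<bar>f y\<bar> \<le> cf" "\<And>y. y \<notin> A \<Longrightarrow> f y = 0"
    and B: "compact B" "\<And>x. \<bar>g x\<bar> \<le> cg" "\<And>x. x \<notin> B \<Longrightarrow> g x = 0"
    and I: "finite I" and disj: "disjoint_family_on Q I" and Q: "\<And>i. i \<in> I \<Longrightarrow> Q i \<in> sets borel"
    and diam: "\<And>i x y. i \<in> I \<Longrightarrow> x \<in> Q i \<Longrightarrow> y \<in> Q i \<Longrightarrow> dist x y < \<delta>"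
  shows "\<bar>\<Sum>i\<in>I. pairing (\<lambda>y. f y * indicator (Q i) y) (\<lambda>x. g x * indicator (Q i) x)\<bar>
    \<le> cf * cg * (\<integral>z. indicator (B \<times> A) z * indicator {z. dist (fst z) (snd z) < \<delta>} z
        * \<bar>K (fst z) (snd z)\<bar> \<partial>(N \<Otimes>\<^sub>M M))"
proof -
  define D where "D = {z :: 'a \<times> 'a. dist (fst z) (snd z) < \<delta>}"
  define h where "h z = (\<Sum>i\<in>I. pairing_density (\<lambda>y. f y * indicator (Q i) y) (\<lambda>x. g x * indicator (Q i) x) z)"
    for z
  define w where "w z = cf * cg * (indicator (B \<times> A) z * indicator D z * \<bar>K (fst z) (snd z)\<bar>)" for z
  have cf_cg: "0 \<le> cf" "0 \<le> cg"
    using order_trans[OF abs_ge_zero A(2)] order_trans[OF abs_ge_zero B(2)] by auto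
  have bcs: "bdd_compact_supp M (\<lambda>y. f y * indicator (Q i) y)" "bdd_compact_supp N (\<lambda>x. g x * indicator (Q i) x)"
    if "i \<in> I" for i
    using Q[OF that] by (simp_all add: bdd_compact_supp_mult_indicator f g sets_M sets_N)
  have D: "D \<in> sets (N \<Otimes>\<^sub>M M)"
    unfolding sets_NM D_def by (intro borel_open open_Collect_less continuous_intros)
  have "(\<Sum>i\<in>I. pairing (\<lambda>y. f y * indicator (Q i) y) (\<lambda>x. g x * indicator (Q i) x)) = integral\<^sup>L (N \<Otimes>\<^sub>M M) h"
    unfolding h_def using I bcs
    by (simp add: pairing_eq_integral integrable_pairing_density Bochner_Integration.integral_sum)
  moreover have "integrable (N \<Otimes>\<^sub>M M) h"
    unfolding h_def using bcs by (simp add: integrable_pairing_density)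
  moreover have "integrable (N \<Otimes>\<^sub>M M) w"
  proof (rule Bochner_Integration.integrable_bound[OF _ _ AE_I2])
    show "integrable (N \<Otimes>\<^sub>M M) (\<lambda>z. cf * cg * \<bar>indicator (B \<times> A) z * K (fst z) (snd z)\<bar>)"
      by (intro integrable_mult_right integrable_abs integrable_kernel_on_compact compact_Times A(1) B(1))
    show "w \<in> borel_measurable (N \<Otimes>\<^sub>M M)"
      unfolding w_def using compact_in_sets_NM[OF compact_Times[OF B(1) A(1)]] D
      by (intro borel_measurable_times borel_measurable_indicator borel_measurable_abs
          kernel_measurable borel_measurable_const)
    show "norm (w z) \<le> norm (cf * cg * \<bar>indicator (B \<times> A) z * K (fst z) (snd z)\<bar>)" for z
      unfolding w_def using cf_cg by (simp add: indicator_def abs_mult)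
  qed
  moreover have "\<bar>h z\<bar> \<le> w z" for z
  proof -
    define \<sigma> where "\<sigma> = (\<Sum>i\<in>I. indicator (Q i) (fst z) * indicator (Q i) (snd z) :: real)"
    have "h z = pairing_density f g z * \<sigma>"
      unfolding h_def \<sigma>_def pairing_density_def by (simp add: sum_distrib_left mult_ac)
    moreover have "0 \<le> \<sigma>" "\<sigma> \<le> indicator D z"
      unfolding \<sigma>_def D_def using sum_indicator_le_near_diagonal[OF I disj diam, where x="fst z" and y="snd z"]
      by (auto intro: sum_nonneg)
    moreover have "\<bar>pairing_density f g z\<bar> \<le> cf * cg * \<bar>indicator (B \<times> A) z * K (fst z) (snd z)\<bar>"
      by (rule abs_pairing_density_le[OF A(2,3) B(2,3)])
    ultimately have "\<bar>h z\<bar> \<le> cf * cg * \<bar>indicator (B \<times> A) z * K (fst z) (snd z)\<bar> * indicator D z"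
      by (auto simp: abs_mult intro!: mult_mono)
    then show ?thesis
      unfolding w_def by (simp add: abs_mult mult_ac)
  qed
  ultimately have "\<bar>\<Sum>i\<in>I. pairing (\<lambda>y. f y * indicator (Q i) y) (\<lambda>x. g x * indicator (Q i) x)\<bar>
      \<le> integral\<^sup>L (N \<Otimes>\<^sub>M M) w"
    by (simp add: integral_abs_bound_integral)
  then show ?thesis
    unfolding w_def D_def by simp
qed

lemma pairing_bound_approx:
  assumes f: "bdd_compact_supp M f" and g: "bdd_compact_supp N g" and "0 < e"
  shows "\<bar>pairing f g\<bar> \<le> 2 * C * Lp_norm M p f * Lp_norm N (p / (p - 1)) g + e"
proof -
  obtain A cf where A: "compact A" "\<And>y. \<bar>f y\<bar> \<le> cf" "\<And>y. y \<notin> A \<Longrightarrow> f y = 0" "0 \<le> cf"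
    using bdd_compact_suppE[OF f] by metis
  obtain B cg where B: "compact B" "\<And>x. \<bar>g x\<bar> \<le> cg" "\<And>x. x \<notin> B \<Longrightarrow> g x = 0" "0 \<le> cg"
    using bdd_compact_suppE[OF g] by metis
  have "0 < cf * cg + 1"
    using A(4) B(4) by (simp add: add_nonneg_pos)
  then have "0 < e / (cf * cg + 1)"
    using \<open>0 < e\<close> by simp
  then obtain \<delta> where "0 < \<delta>" and near: "(\<integral>z. indicator (B \<times> A) z * indicator {z. dist (fst z) (snd z) < \<delta>} z
      * \<bar>K (fst z) (snd z)\<bar> \<partial>(N \<Otimes>\<^sub>M M)) < e / (cf * cg + 1)"
    using kernel_near_diagonal_small[OF compact_Times[OF B(1) A(1)]] by blast
  obtain I :: "nat set" and Q where I: "finite I" and disj: "disjoint_family_on Q I"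
    and Q: "\<And>i. i \<in> I \<Longrightarrow> Q i \<in> sets borel" and cover: "A \<union> B \<subseteq> (\<Union>i\<in>I. Q i)"
    and diam: "\<And>i x y. i \<in> I \<Longrightarrow> x \<in> Q i \<Longrightarrow> y \<in> Q i \<Longrightarrow> dist x y < \<delta>"
    using compact_partition_small_diameter[OF compact_Un[OF A(1) B(1)] \<open>0 < \<delta>\<close>] by metis
  have supp: "\<And>y. y \<notin> (\<Union>i\<in>I. Q i) \<Longrightarrow> f y = 0" "\<And>x. x \<notin> (\<Union>i\<in>I. Q i) \<Longrightarrow> g x = 0"
    using cover A(3) B(3) by blast+
  then have "f y * indicator (\<Union>i\<in>I. Q i) y = f y" "g y * indicator (\<Union>i\<in>I. Q i) y = g y" for y
    by (cases "y \<in> (\<Union>i\<in>I. Q i)", simp_all)+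
  then have "(\<lambda>y. f y * indicator (\<Union>i\<in>I. Q i) y) = f" "(\<lambda>x. g x * indicator (\<Union>i\<in>I. Q i) x) = g"
    by auto
  moreover define a where "a i j = pairing (\<lambda>y. f y * indicator (Q i) y) (\<lambda>x. g x * indicator (Q j) x)" for i j
  ultimately have "pairing f g = (\<Sum>i\<in>I. \<Sum>j\<in>I. a i j)"
    using pairing_sum[OF f g I I disj disj] Q by simp
  also have "\<dots> = (\<Sum>i\<in>I. a i i) + (\<Sum>i\<in>I. \<Sum>j\<in>I - {i}. a i j)"
    using I by (simp add: sum.remove sum.distrib)
  finally have "\<bar>pairing f g\<bar> \<le> \<bar>\<Sum>i\<in>I. a i i\<bar> + \<bar>\<Sum>i\<in>I. \<Sum>j\<in>I - {i}. a i j\<bar>"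
    by simp
  moreover have "\<bar>\<Sum>i\<in>I. a i i\<bar> \<le> cf * cg * (e / (cf * cg + 1))"
    unfolding a_def using A(4) B(4)
    by (intro order_trans[OF pairing_diagonal_bound[OF f g A(1-3) B(1-3) I disj Q diam]]
        mult_left_mono mult_nonneg_nonneg less_imp_le[OF near])
  moreover have "cf * cg * (e / (cf * cg + 1)) \<le> e"
    using \<open>0 < cf * cg + 1\<close> \<open>0 < e\<close> by (simp add: field_simps)
  moreover have "\<bar>\<Sum>i\<in>I. \<Sum>j\<in>I - {i}. a i j\<bar> \<le> 2 * C * Lp_norm M p f * Lp_norm N (p / (p - 1)) g"
    using abs_sum_offdiagonal_le_of_cuts[OF I pairing_cut_bound[OF f g I disj Q supp]]
    unfolding a_def by (simp add: mult.assoc)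
  ultimately show ?thesis
    by linarith
qed

lemma pairing_bound:
  assumes "bdd_compact_supp M f" "bdd_compact_supp N g"
  shows "\<bar>pairing f g\<bar> \<le> 2 * C * Lp_norm M p f * Lp_norm N (p / (p - 1)) g"
  using pairing_bound_approx[OF assms] by (rule field_le_epsilon)

end

theorem theorem3p2:
  fixes M N :: "'a::euclidean_space measure"
    and K :: "'a \<Rightarrow> 'a \<Rightarrow> real" and f :: "'a \<Rightarrow> real" and p C :: real
  assumes "radon_measure M" and "radon_measure N"
    and "no_common_atoms M N"
    and "1 < p"
    and "loc_square_integrable N M K"
    and "C \<ge> 0"
    and "restrictedly_bounded M N p K C"
    and "bdd_compact_supp M f"
  shows "memLp N p (\<lambda>x. \<integral>y. K x y * f y \<partial>M)
    \<and> Lp_norm N p (\<lambda>x. \<integral>y. K x y * f y \<partial>M) \<le> 2 * C * Lp_norm M p f"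
proof -
  interpret restricted_kernel M N K p C
    using assms(1-7) by unfold_locales
  have f: "bdd_compact_supp M f"
    by (rule assms(8))
  show ?thesis
  proof (rule memLp_of_dual_bound[OF radon_N p_gt_1])
    show "(\<lambda>x. \<integral>y. K x y * f y \<partial>M) \<in> borel_measurable N"
      using f by (intro kernel_transform_measurable) (simp add: bdd_compact_supp_def)
    show "0 \<le> 2 * C * Lp_norm M p f"
      using C_nonneg Lp_norm_nonneg[of M p f] by simp
    fix g
    assume g: "bdd_compact_supp N g"
    show "integrable N (\<lambda>x. (\<integral>y. K x y * f y \<partial>M) * g x)"
      by (rule integrable_kernel_transform_mult[OF f g])
    show "\<bar>\<integral>x. (\<integral>y. K x y * f y \<partial>M) * g x \<partial>N\<bar> \<le> 2 * C * Lp_norm M p f * Lp_norm N (p / (p - 1)) g"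
      using pairing_bound[OF f g] unfolding pairing_def .
  qed
qed

end
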